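(* The metric space $(\mathcal M/\!\sim,d_{\mathrm{GH}})$ is a geodesic space: for any $[X],[Y]\in\mathcal M/\!\sim$ there exists a continuous curve $\gamma:[0,1]\to\mathcal M/\!\sim$ with $\gamma(0)=[X]$, $\gamma(1)=[Y]$ and $d_{\mathrm{GH}}(\gamma(s),\gamma(t))=|t-s|\,d_{\mathrm{GH}}([X],[Y])$ for all $s,t\in[0,1]$.
   Context: $\mathcal M$ is the collection of compact metric spaces; $X\sim Y$ iff $X$ and $Y$ are isometric, and $d_{\mathrm{GH}}([X],[Y]):=d_{\mathrm{GH}}(X,Y)$. Here $d_{\mathrm{GH}}(X,Y)=\tfrac12\inf_{R}\operatorname{dis}(R)$, the infimum over all correspondences $R\subseteq X\times Y$ (relations whose projections onto $X$ and $Y$ are surjective), with $\operatorname{dis}(R)=\sup_{(x,y),(x',y')\in R}|d_X(x,x')-d_Y(y,y')|$. *)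

theory Defs
  imports "HOL-Analysis.Analysis"
begin

definition compact_metric_space :: "'a set \<Rightarrow> ('a \<Rightarrow> 'a \<Rightarrow> real) \<Rightarrow> bool" where
  "compact_metric_space M d \<longleftrightarrow>
     Metric_space M d \<and> compact_space (Metric_space.mtopology M d) \<and> M \<noteq> {}"

definition isometric :: "'a set \<Rightarrow> ('a \<Rightarrow> 'a \<Rightarrow> real) \<Rightarrow> 'b set \<Rightarrow> ('b \<Rightarrow> 'b \<Rightarrow> real) \<Rightarrow> bool" where
  "isometric X dX Y dY \<longleftrightarrow>
     (\<exists>f. bij_betw f X Y \<and> (\<forall>x\<in>X. \<forall>x'\<in>X. dY (f x) (f x') = dX x x'))"

definition correspondence :: "'a set \<Rightarrow> 'b set \<Rightarrow> ('a \<times> 'b) set \<Rightarrow> bool" where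
  "correspondence X Y R \<longleftrightarrow> R \<subseteq> X \<times> Y \<and> fst ` R = X \<and> snd ` R = Y"

definition distortion :: "('a \<Rightarrow> 'a \<Rightarrow> real) \<Rightarrow> ('b \<Rightarrow> 'b \<Rightarrow> real) \<Rightarrow> ('a \<times> 'b) set \<Rightarrow> real" where
  "distortion dX dY R =
     (SUP p \<in> R \<times> R. \<bar>dX (fst (fst p)) (fst (snd p)) - dY (snd (fst p)) (snd (snd p))\<bar>)"

definition GH_dist :: "'a set \<Rightarrow> ('a \<Rightarrow> 'a \<Rightarrow> real) \<Rightarrow> 'b set \<Rightarrow> ('b \<Rightarrow> 'b \<Rightarrow> real) \<Rightarrow> real" where
  "GH_dist X dX Y dY = (1/2) * (INF R \<in> {R. correspondence X Y R}. distortion dX dY R)"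

end

theory Submission
  imports Defs
begin

text \<open>
  By compactness of \<open>X\<close> and \<open>Y\<close> (Tychonoff's theorem for pairs of maps \<open>X \<rightarrow> Y\<close>, \<open>Y \<rightarrow> X\<close>)
  the infimum defining \<open>d\<^sub>G\<^sub>H(X, Y)\<close> is attained by a correspondence \<open>R\<close>, which may be taken closed.
  For \<open>0 < t < 1\<close> let \<open>S\<^sub>t\<close> be \<open>R\<close> with the metric \<open>(1 - t) d\<^sub>X + t d\<^sub>Y\<close>, and let \<open>S\<^sub>0 = X\<close>,
  \<open>S\<^sub>1 = Y\<close>. The correspondences induced by \<open>R\<close> give
  \<open>d\<^sub>G\<^sub>H(S\<^sub>s, S\<^sub>t) \<le> |t - s| d\<^sub>G\<^sub>H(X, Y)\<close>, and the triangle inequality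
  \<open>d\<^sub>G\<^sub>H(X, Y) \<le> d\<^sub>G\<^sub>H(X, S\<^sub>s) + d\<^sub>G\<^sub>H(S\<^sub>s, S\<^sub>t) + d\<^sub>G\<^sub>H(S\<^sub>t, Y)\<close> forces equality.
  Each \<open>S\<^sub>t\<close> is compact because \<open>R\<close> is closed in the compact space \<open>X \<times> Y\<close>.
\<close>

section \<open>Distortion and the Gromov--Hausdorff distance\<close>

text \<open>The distortion is a supremum of reals, so it is only meaningful for bounded distances.\<close>
definition dist_bounded :: "'a set \<Rightarrow> ('a \<Rightarrow> 'a \<Rightarrow> real) \<Rightarrow> real \<Rightarrow> bool" where
  "dist_bounded X d B \<longleftrightarrow> (\<forall>x\<in>X. \<forall>x'\<in>X. \<bar>d x x'\<bar> \<le> B)"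

definition distortion_bounded ::
    "('a \<Rightarrow> 'a \<Rightarrow> real) \<Rightarrow> ('b \<Rightarrow> 'b \<Rightarrow> real) \<Rightarrow> ('a \<times> 'b) set \<Rightarrow> real \<Rightarrow> bool" where
  "distortion_bounded dX dY R c \<longleftrightarrow> (\<forall>(x, y)\<in>R. \<forall>(x', y')\<in>R. \<bar>dX x x' - dY y y'\<bar> \<le> c)"

lemma distortion_boundedD:
  "distortion_bounded dX dY R c \<Longrightarrow> (x, y) \<in> R \<Longrightarrow> (x', y') \<in> R \<Longrightarrow> \<bar>dX x x' - dY y y'\<bar> \<le> c"
  unfolding distortion_bounded_def by fast

lemma distortion_bounded_subset:
  "distortion_bounded dX dY R c \<Longrightarrow> R' \<subseteq> R \<Longrightarrow> distortion_bounded dX dY R' c"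
  unfolding distortion_bounded_def by blast

lemma distortion_bounded_mono:
  "distortion_bounded dX dY R c \<Longrightarrow> c \<le> c' \<Longrightarrow> distortion_bounded dX dY R c'"
  unfolding distortion_bounded_def by fastforce

lemma distortion_bounded_limit:
  assumes "\<And>n. distortion_bounded dX dY R (c + 1 / Suc n)"
  shows "distortion_bounded dX dY R c"
  unfolding distortion_bounded_def
proof (clarify, rule field_le_epsilon)
  fix x y x' y' and e :: real assume xy: "(x, y) \<in> R" "(x', y') \<in> R" and "0 < e"
  then obtain n where "inverse (real (Suc n)) < e" using reals_Archimedean by blast
  then show "\<bar>dX x x' - dY y y'\<bar> \<le> c + e"
    using distortion_boundedD[OF assms[of n] xy] by (simp add: inverse_eq_divide)
qed

lemma correspondence_nonempty: "correspondence X Y R \<Longrightarrow> X \<noteq> {} \<Longrightarrow> R \<noteq> {}"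
  unfolding correspondence_def by auto

lemma correspondence_Times: "X \<noteq> {} \<Longrightarrow> Y \<noteq> {} \<Longrightarrow> correspondence X Y (X \<times> Y)"
  unfolding correspondence_def by auto

lemma correspondence_mono:
  "correspondence X Y R \<Longrightarrow> R \<subseteq> R' \<Longrightarrow> R' \<subseteq> X \<times> Y \<Longrightarrow> correspondence X Y R'"
  unfolding correspondence_def by (intro conjI equalityI; force)

lemma correspondence_converse: "correspondence Y X (converse R) \<longleftrightarrow> correspondence X Y R"
  unfolding correspondence_def fst_eq_Domain snd_eq_Range by auto

lemma correspondence_relcomp:
  assumes "correspondence X Y R1" "correspondence Y Z R2"
  shows "correspondence X Z (R1 O R2)"
  using assms unfolding correspondence_def fst_eq_Domain snd_eq_Range by blast

lemma distortion_bdd_above: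
  assumes "R \<subseteq> X \<times> Y" "dist_bounded X dX A" "dist_bounded Y dY B"
  shows "bdd_above ((\<lambda>p. \<bar>dX (fst (fst p)) (fst (snd p)) - dY (snd (fst p)) (snd (snd p))\<bar>) ` (R \<times> R))"
proof (rule bdd_aboveI2)
  fix p assume "p \<in> R \<times> R"
  then have "fst (fst p) \<in> X" "fst (snd p) \<in> X" "snd (fst p) \<in> Y" "snd (snd p) \<in> Y"
    using assms(1) by auto
  then show "\<bar>dX (fst (fst p)) (fst (snd p)) - dY (snd (fst p)) (snd (snd p))\<bar> \<le> A + B"
    using assms(2,3) unfolding dist_bounded_def by fastforce
qed

lemma distortion_bounded_distortion:
  assumes "R \<subseteq> X \<times> Y" "dist_bounded X dX A" "dist_bounded Y dY B"
  shows "distortion_bounded dX dY R (distortion dX dY R)"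
  unfolding distortion_bounded_def distortion_def
proof (clarify)
  fix x y x' y' assume "(x, y) \<in> R" "(x', y') \<in> R"
  then show "\<bar>dX x x' - dY y y'\<bar>
      \<le> (SUP p\<in>R \<times> R. \<bar>dX (fst (fst p)) (fst (snd p)) - dY (snd (fst p)) (snd (snd p))\<bar>)"
    using cSUP_upper[OF _ distortion_bdd_above[OF assms], of "((x, y), (x', y'))"] by simp
qed

lemma distortion_le:
  "R \<noteq> {} \<Longrightarrow> distortion_bounded dX dY R c \<Longrightarrow> distortion dX dY R \<le> c"
  unfolding distortion_def distortion_bounded_def by (rule cSUP_least) fastforce+

lemma distortion_nonneg:
  assumes "R \<subseteq> X \<times> Y" "dist_bounded X dX A" "dist_bounded Y dY B" "R \<noteq> {}"
  shows "0 \<le> distortion dX dY R"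
proof -
  obtain x y where "(x, y) \<in> R" using assms(4) by auto
  then show ?thesis
    using distortion_boundedD[OF distortion_bounded_distortion[OF assms(1-3)]] by force
qed

lemma distortion_converse: "distortion dY dX (converse R) = distortion dX dY R"
proof -
  let ?swap = "\<lambda>p. (prod.swap (fst p), prod.swap (snd p))"
  have swap: "converse R \<times> converse R = ?swap ` (R \<times> R)"
    by (auto simp: image_iff) (metis swap_simp)+
  show ?thesis
    unfolding distortion_def swap image_comp
    by (rule arg_cong[where f = Sup], rule image_cong) (auto simp: abs_minus_commute)
qed

lemma distortion_relcomp_le:
  assumes "R1 \<subseteq> X \<times> Y" "R2 \<subseteq> Y \<times> Z" "R1 O R2 \<noteq> {}"
    and "dist_bounded X dX A" "dist_bounded Y dY B" "dist_bounded Z dZ C"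
  shows "distortion dX dZ (R1 O R2) \<le> distortion dX dY R1 + distortion dY dZ R2"
proof (rule distortion_le[OF assms(3)], unfold distortion_bounded_def, clarify)
  fix x z x' z' y y' assume "(x, y) \<in> R1" "(y, z) \<in> R2" "(x', y') \<in> R1" "(y', z') \<in> R2"
  then have "\<bar>dX x x' - dY y y'\<bar> \<le> distortion dX dY R1" "\<bar>dY y y' - dZ z z'\<bar> \<le> distortion dY dZ R2"
    using distortion_boundedD[OF distortion_bounded_distortion[OF assms(1,4,5)]]
      distortion_boundedD[OF distortion_bounded_distortion[OF assms(2,5,6)]] by blast+
  then show "\<bar>dX x x' - dZ z z'\<bar> \<le> distortion dX dY R1 + distortion dY dZ R2"
    by linarith
qed

lemma GH_dist_le_distortion:
  assumes "X \<noteq> {}" "dist_bounded X dX A" "dist_bounded Y dY B" "correspondence X Y R"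
  shows "GH_dist X dX Y dY \<le> distortion dX dY R / 2"
proof -
  have "bdd_below (distortion dX dY ` {R. correspondence X Y R})"
    using distortion_nonneg[OF _ assms(2,3)] correspondence_nonempty[OF _ assms(1)]
    by (intro bdd_belowI2[where m = 0]) (auto simp: correspondence_def)
  then have "(INF R \<in> {R. correspondence X Y R}. distortion dX dY R) \<le> distortion dX dY R"
    using assms(4) by (intro cINF_lower) auto
  then show ?thesis unfolding GH_dist_def by simp
qed

lemma GH_dist_greatest:
  assumes "X \<noteq> {}" "Y \<noteq> {}" "\<And>R. correspondence X Y R \<Longrightarrow> c \<le> distortion dX dY R"
  shows "c \<le> 2 * GH_dist X dX Y dY"
proof -
  have "c \<le> (INF R \<in> {R. correspondence X Y R}. distortion dX dY R)"
    using correspondence_Times[OF assms(1,2)] assms(3) by (intro cINF_greatest) auto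
  then show ?thesis unfolding GH_dist_def by simp
qed

lemma correspondence_near_GH_dist:
  assumes "X \<noteq> {}" "Y \<noteq> {}" "e > 0"
  obtains R where "correspondence X Y R" "distortion dX dY R < 2 * GH_dist X dX Y dY + e"
proof (rule ccontr)
  assume "\<not> thesis"
  with that have "2 * GH_dist X dX Y dY + e \<le> 2 * GH_dist X dX Y dY"
    by (intro GH_dist_greatest[OF assms(1,2)]) (meson not_less)
  with assms(3) show False by simp
qed

lemma GH_dist_nonneg:
  assumes "X \<noteq> {}" "Y \<noteq> {}" "dist_bounded X dX A" "dist_bounded Y dY B"
  shows "0 \<le> GH_dist X dX Y dY"
proof -
  have "0 \<le> 2 * GH_dist X dX Y dY"
    by (rule GH_dist_greatest[OF assms(1,2)])
      (use distortion_nonneg[OF _ assms(3,4)] correspondence_nonempty[OF _ assms(1)] in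
        \<open>auto simp: correspondence_def\<close>)
  then show ?thesis by simp
qed

lemma GH_dist_commute: "GH_dist Y dY X dX = GH_dist X dX Y dY"
proof -
  have "{R. correspondence Y X R} = converse ` {R. correspondence X Y R}"
    by (auto simp: correspondence_converse image_iff intro: exI[where x = "converse R" for R])
  then show ?thesis
    unfolding GH_dist_def by (simp add: image_comp o_def distortion_converse)
qed

lemma GH_dist_triangle:
  assumes "X \<noteq> {}" "Y \<noteq> {}" "Z \<noteq> {}"
    and "dist_bounded X dX A" "dist_bounded Y dY B" "dist_bounded Z dZ C"
  shows "GH_dist X dX Z dZ \<le> GH_dist X dX Y dY + GH_dist Y dY Z dZ"
proof (rule field_le_epsilon)
  fix e :: real assume e: "0 < e"
  obtain R1 where R1: "correspondence X Y R1" "distortion dX dY R1 < 2 * GH_dist X dX Y dY + e"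
    using correspondence_near_GH_dist[OF assms(1,2) e] .
  obtain R2 where R2: "correspondence Y Z R2" "distortion dY dZ R2 < 2 * GH_dist Y dY Z dZ + e"
    using correspondence_near_GH_dist[OF assms(2,3) e] .
  have R12: "correspondence X Z (R1 O R2)"
    using correspondence_relcomp[OF R1(1) R2(1)] .
  have "2 * GH_dist X dX Z dZ \<le> distortion dX dZ (R1 O R2)"
    using GH_dist_le_distortion[OF assms(1,4,6) R12] by simp
  also have "\<dots> \<le> distortion dX dY R1 + distortion dY dZ R2"
    using R1(1) R2(1) correspondence_nonempty[OF R12 assms(1)]
    by (intro distortion_relcomp_le[OF _ _ _ assms(4-6)]) (auto simp: correspondence_def)
  finally show "GH_dist X dX Z dZ \<le> GH_dist X dX Y dY + GH_dist Y dY Z dZ + e"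
    using R1(2) R2(2) by linarith
qed

lemma GH_dist_le_parametrized:
  assumes "A \<noteq> {}" "dist_bounded A dA \<alpha>" "dist_bounded B dB \<beta>" "u ` P = A" "v ` P = B"
    and "\<And>p q. p \<in> P \<Longrightarrow> q \<in> P \<Longrightarrow> \<bar>dA (u p) (u q) - dB (v p) (v q)\<bar> \<le> c"
  shows "GH_dist A dA B dB \<le> c / 2"
proof -
  define R where "R = (\<lambda>p. (u p, v p)) ` P"
  have R: "correspondence A B R"
    using assms(4,5) unfolding correspondence_def R_def by (auto simp: image_comp o_def)
  have "distortion dA dB R \<le> c"
    using assms(6) correspondence_nonempty[OF R assms(1)]
    by (intro distortion_le) (auto simp: distortion_bounded_def R_def)
  then show ?thesis using GH_dist_le_distortion[OF assms(1-3) R] by linarith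
qed

lemma GH_dist_le_interpolated:
  assumes "A \<noteq> {}" "dist_bounded A dA \<alpha>" "dist_bounded B dB \<beta>" "u ` P = A" "v ` P = B"
    and "\<And>p q. p \<in> P \<Longrightarrow> q \<in> P \<Longrightarrow> dA (u p) (u q) = (1 - s) * a p q + s * b p q"
    and "\<And>p q. p \<in> P \<Longrightarrow> q \<in> P \<Longrightarrow> dB (v p) (v q) = (1 - t) * a p q + t * b p q"
    and "\<And>p q. p \<in> P \<Longrightarrow> q \<in> P \<Longrightarrow> \<bar>a p q - b p q\<bar> \<le> c"
  shows "GH_dist A dA B dB \<le> \<bar>t - s\<bar> * c / 2"
proof (rule GH_dist_le_parametrized[OF assms(1-5)])
  fix p q assume pq: "p \<in> P" "q \<in> P"
  have "dA (u p) (u q) - dB (v p) (v q) = (t - s) * (a p q - b p q)"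
    using assms(6,7)[OF pq] by (simp add: algebra_simps)
  then show "\<bar>dA (u p) (u q) - dB (v p) (v q)\<bar> \<le> \<bar>t - s\<bar> * c"
    using assms(8)[OF pq] by (simp add: abs_mult mult_left_mono)
qed

section \<open>Optimal closed correspondences between compact spaces\<close>

lemma compact_metric_space_bounded:
  assumes "compact_metric_space X d"
  obtains B where "dist_bounded X d B"
proof -
  interpret Metric_space X d using assms unfolding compact_metric_space_def by blast
  have "mbounded X"
    using assms compactin_imp_mbounded unfolding compact_metric_space_def compact_space_def by simp
  then show ?thesis
    using that by (force simp: mbounded_alt dist_bounded_def)
qed

lemma closedin_forall_le:
  assumes "I \<noteq> {}" "\<And>i. i \<in> I \<Longrightarrow> continuous_map T euclideanreal (h i)"
  shows "closedin T {p \<in> topspace T. \<forall>i\<in>I. h i p \<le> c}"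
proof -
  have "{p \<in> topspace T. \<forall>i\<in>I. h i p \<le> c} = (\<Inter>i\<in>I. {p \<in> topspace T. h i p \<in> {..c}})"
    using assms(1) by auto
  also have "closedin T \<dots>"
    using assms by (intro closedin_INT closedin_continuous_map_preimage) auto
  finally show ?thesis .
qed

lemma (in Metric_space) continuous_map_distance:
  assumes "continuous_map T mtopology u" "continuous_map T mtopology v"
  shows "continuous_map T euclideanreal (\<lambda>p. d (u p) (v p))"
  using continuous_map_mdist[of T "metric (M, d)" u v] assms by simp

lemma (in Metric_space) mdist_quadrilateral:
  assumes "x \<in> M" "y \<in> M" "a \<in> M" "b \<in> M"
  shows "\<bar>d x y - d a b\<bar> \<le> d x a + d y b"
  using triangle[of x a y] triangle[of a b y] triangle[of a x b] triangle[of x y b] assms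
    commute[of a x] commute[of b y]
  by (simp add: abs_le_iff)

definition map_pair_relation :: "'a set \<Rightarrow> 'b set \<Rightarrow> ('a \<Rightarrow> 'b) \<Rightarrow> ('b \<Rightarrow> 'a) \<Rightarrow> ('a \<times> 'b) set" where
  "map_pair_relation X Y f g = (\<lambda>x. (x, f x)) ` X \<union> (\<lambda>y. (g y, y)) ` Y"

lemma correspondence_map_pair_relation:
  "f \<in> X \<rightarrow> Y \<Longrightarrow> g \<in> Y \<rightarrow> X \<Longrightarrow> correspondence X Y (map_pair_relation X Y f g)"
  unfolding correspondence_def map_pair_relation_def image_Un image_image by auto

lemma distortion_bounded_map_pair_relation_iff:
  assumes "\<And>x x'. dX x x' = dX x' x" "\<And>y y'. dY y y' = dY y' y"
  shows "distortion_bounded dX dY (map_pair_relation X Y f g) c \<longleftrightarrow>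
    (\<forall>x\<in>X. \<forall>x'\<in>X. \<bar>dX x x' - dY (f x) (f x')\<bar> \<le> c) \<and>
    (\<forall>y\<in>Y. \<forall>y'\<in>Y. \<bar>dX (g y) (g y') - dY y y'\<bar> \<le> c) \<and>
    (\<forall>x\<in>X. \<forall>y\<in>Y. \<bar>dX x (g y) - dY (f x) y\<bar> \<le> c)"
    (is "_ \<longleftrightarrow> ?graphs \<and> ?cographs \<and> ?mixed")
proof
  assume D: "distortion_bounded dX dY (map_pair_relation X Y f g) c"
  have graph: "x \<in> X \<Longrightarrow> (x, f x) \<in> map_pair_relation X Y f g"
    and cograph: "y \<in> Y \<Longrightarrow> (g y, y) \<in> map_pair_relation X Y f g" for x y
    unfolding map_pair_relation_def by auto
  show "?graphs \<and> ?cographs \<and> ?mixed"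
    by (intro conjI ballI; rule distortion_boundedD[OF D]; simp add: graph cograph)
next
  assume H: "?graphs \<and> ?cographs \<and> ?mixed"
  then have "\<bar>dX (g y) x - dY y (f x)\<bar> \<le> c" if "x \<in> X" "y \<in> Y" for x y
    using that assms by metis
  with H show "distortion_bounded dX dY (map_pair_relation X Y f g) c"
    unfolding distortion_bounded_def map_pair_relation_def by auto
qed

context Metric_space12
begin

definition map_pair_topology :: "(('a \<Rightarrow> 'b) \<times> ('b \<Rightarrow> 'a)) topology" where
  "map_pair_topology =
     prod_topology (product_topology (\<lambda>_. M2.mtopology) M1) (product_topology (\<lambda>_. M1.mtopology) M2)"

lemma topspace_map_pair_topology: "topspace map_pair_topology = (M1 \<rightarrow>\<^sub>E M2) \<times> (M2 \<rightarrow>\<^sub>E M1)"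
  by (simp add: map_pair_topology_def)

lemma compact_space_map_pair_topology:
  "compact_space M1.mtopology \<Longrightarrow> compact_space M2.mtopology \<Longrightarrow> compact_space map_pair_topology"
  by (simp add: map_pair_topology_def compact_space_prod_topology compact_space_product_topology)

lemma closedin_map_pair_distortion_bounded:
  assumes "M1 \<noteq> {}" "M2 \<noteq> {}"
  shows "closedin map_pair_topology
    {p \<in> topspace map_pair_topology. distortion_bounded d1 d2 (map_pair_relation M1 M2 (fst p) (snd p)) c}"
proof -
  have ev1: "continuous_map map_pair_topology M2.mtopology (\<lambda>p. fst p x)" if "x \<in> M1" for x
    using continuous_map_compose[OF continuous_map_fst continuous_map_product_projection[OF that]]
    by (simp add: o_def map_pair_topology_def)
  have ev2: "continuous_map map_pair_topology M1.mtopology (\<lambda>p. snd p y)" if "y \<in> M2" for y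
    using continuous_map_compose[OF continuous_map_snd continuous_map_product_projection[OF that]]
    by (simp add: o_def map_pair_topology_def)
  have "{p \<in> topspace map_pair_topology. distortion_bounded d1 d2 (map_pair_relation M1 M2 (fst p) (snd p)) c}
    = {p \<in> topspace map_pair_topology. \<forall>i\<in>M1 \<times> M1. \<bar>d1 (fst i) (snd i) - d2 (fst p (fst i)) (fst p (snd i))\<bar> \<le> c}
    \<inter> {p \<in> topspace map_pair_topology. \<forall>i\<in>M2 \<times> M2. \<bar>d1 (snd p (fst i)) (snd p (snd i)) - d2 (fst i) (snd i)\<bar> \<le> c}
    \<inter> {p \<in> topspace map_pair_topology. \<forall>i\<in>M1 \<times> M2. \<bar>d1 (fst i) (snd p (snd i)) - d2 (fst p (fst i)) (snd i)\<bar> \<le> c}"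
    by (auto simp: distortion_bounded_map_pair_relation_iff M1.commute M2.commute)
  also have "closedin map_pair_topology \<dots>"
    using assms
    by (intro closedin_Int closedin_forall_le continuous_map_real_abs continuous_map_diff
        M1.continuous_map_distance M2.continuous_map_distance ev1 ev2) auto
  finally show ?thesis .
qed

lemma map_pair_in_correspondence:
  assumes "correspondence M1 M2 R"
  obtains p where "p \<in> topspace map_pair_topology" "map_pair_relation M1 M2 (fst p) (snd p) \<subseteq> R"
proof -
  define f where "f = restrict (\<lambda>x. SOME y. (x, y) \<in> R) M1"
  define g where "g = restrict (\<lambda>y. SOME x. (x, y) \<in> R) M2"
  have f: "(x, f x) \<in> R" if "x \<in> M1" for x
    using that assms someI_ex[of "\<lambda>y. (x, y) \<in> R"] unfolding f_def correspondence_def by force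
  have g: "(g y, y) \<in> R" if "y \<in> M2" for y
    using that assms someI_ex[of "\<lambda>x. (x, y) \<in> R"] unfolding g_def correspondence_def by force
  have "(f, g) \<in> topspace map_pair_topology"
    using f g assms unfolding topspace_map_pair_topology correspondence_def
    by (auto simp: f_def g_def)
  moreover have "map_pair_relation M1 M2 f g \<subseteq> R"
    using f g unfolding map_pair_relation_def by auto
  ultimately show ?thesis using that[of "(f, g)"] by simp
qed

lemma optimal_map_pair:
  assumes "compact_metric_space M1 d1" "compact_metric_space M2 d2"
  obtains p where "p \<in> topspace map_pair_topology"
    "distortion_bounded d1 d2 (map_pair_relation M1 M2 (fst p) (snd p)) (2 * GH_dist M1 d1 M2 d2)"
proof -
  have ne: "M1 \<noteq> {}" "M2 \<noteq> {}" using assms unfolding compact_metric_space_def by auto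
  obtain A B where A: "dist_bounded M1 d1 A" and B: "dist_bounded M2 d2 B"
    using assms compact_metric_space_bounded by metis
  define c where "c n = 2 * GH_dist M1 d1 M2 d2 + 1 / Suc n" for n
  define K where "K n = {p \<in> topspace map_pair_topology.
    distortion_bounded d1 d2 (map_pair_relation M1 M2 (fst p) (snd p)) (c n)}" for n
  have compact: "compact_space map_pair_topology"
    using assms by (intro compact_space_map_pair_topology) (auto simp: compact_metric_space_def)
  have closed: "closedin map_pair_topology (K n)" for n
    unfolding K_def by (rule closedin_map_pair_distortion_bounded[OF ne])
  have nonempty: "K n \<noteq> {}" for n
  proof -
    obtain R where R: "correspondence M1 M2 R" "distortion d1 d2 R < c n"
      using correspondence_near_GH_dist[OF ne, of "1 / Suc n"] unfolding c_def by auto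
    have "distortion_bounded d1 d2 R (distortion d1 d2 R)"
      using R(1) A B by (intro distortion_bounded_distortion) (auto simp: correspondence_def)
    then have "distortion_bounded d1 d2 R (c n)"
      using R(2) distortion_bounded_mono by fastforce
    moreover obtain p where "p \<in> topspace map_pair_topology"
      "map_pair_relation M1 M2 (fst p) (snd p) \<subseteq> R"
      using map_pair_in_correspondence[OF R(1)] .
    ultimately show ?thesis
      unfolding K_def using distortion_bounded_subset by blast
  qed
  have decreasing: "decseq K"
  proof (rule decseq_SucI)
    fix n
    have "c (Suc n) \<le> c n" unfolding c_def by (simp add: frac_le)
    then show "K (Suc n) \<subseteq> K n" unfolding K_def using distortion_bounded_mono by blast
  qed
  obtain p where "p \<in> (\<Inter>n. K n)"
    using compact_space_imp_nest[OF compact closed nonempty decreasing] by blast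
  then show ?thesis
    using that distortion_bounded_limit[of d1 d2 _ "2 * GH_dist M1 d1 M2 d2"]
    unfolding K_def c_def by blast
qed

definition rel_closure :: "('a \<times> 'b) set \<Rightarrow> ('a \<times> 'b) set" where
  "rel_closure R = {(x, y). x \<in> M1 \<and> y \<in> M2 \<and> (\<forall>e>0. \<exists>(a, b)\<in>R. d1 x a < e \<and> d2 y b < e)}"

lemma rel_closureE:
  assumes "(x, y) \<in> rel_closure R" "e > 0"
  obtains a b where "(a, b) \<in> R" "d1 x a < e" "d2 y b < e"
  using assms unfolding rel_closure_def by blast

lemma subset_rel_closure: "R \<subseteq> M1 \<times> M2 \<Longrightarrow> R \<subseteq> rel_closure R"
  unfolding rel_closure_def by force

lemma rel_closure_subset: "rel_closure R \<subseteq> M1 \<times> M2"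
  unfolding rel_closure_def by auto

lemma rel_closure_rel_closure:
  assumes "R \<subseteq> M1 \<times> M2"
  shows "rel_closure (rel_closure R) \<subseteq> rel_closure R"
proof clarify
  fix x y assume xy: "(x, y) \<in> rel_closure (rel_closure R)"
  have "\<exists>(a', b')\<in>R. d1 x a' < e \<and> d2 y b' < e" if "e > 0" for e
  proof -
    have e2: "e/2 > 0" using that by simp
    obtain a b where ab: "(a, b) \<in> rel_closure R" "d1 x a < e/2" "d2 y b < e/2"
      using rel_closureE[OF xy e2] .
    obtain a' b' where ab': "(a', b') \<in> R" "d1 a a' < e/2" "d2 b b' < e/2"
      using rel_closureE[OF ab(1) e2] .
    have "d1 x a' \<le> d1 x a + d1 a a'" "d2 y b' \<le> d2 y b + d2 b b'"
      using xy ab ab' assms M1.triangle M2.triangle unfolding rel_closure_def by auto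
    with ab ab' show ?thesis by force
  qed
  with xy show "(x, y) \<in> rel_closure R" unfolding rel_closure_def by auto
qed

lemma distortion_bounded_rel_closure:
  assumes "R \<subseteq> M1 \<times> M2" "distortion_bounded d1 d2 R c"
  shows "distortion_bounded d1 d2 (rel_closure R) c"
  unfolding distortion_bounded_def
proof (clarify, rule field_le_epsilon)
  fix x y x' y' and e :: real
  assume xy: "(x, y) \<in> rel_closure R" "(x', y') \<in> rel_closure R" and "0 < e"
  have e4: "e/4 > 0" using \<open>0 < e\<close> by simp
  obtain a b where ab: "(a, b) \<in> R" "d1 x a < e/4" "d2 y b < e/4"
    using rel_closureE[OF xy(1) e4] .
  obtain a' b' where ab': "(a', b') \<in> R" "d1 x' a' < e/4" "d2 y' b' < e/4"
    using rel_closureE[OF xy(2) e4] .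
  have pts: "x \<in> M1" "x' \<in> M1" "y \<in> M2" "y' \<in> M2" "a \<in> M1" "a' \<in> M1" "b \<in> M2" "b' \<in> M2"
    using xy ab(1) ab'(1) assms(1) unfolding rel_closure_def by auto
  have "\<bar>d1 x x' - d1 a a'\<bar> \<le> d1 x a + d1 x' a'" "\<bar>d2 y y' - d2 b b'\<bar> \<le> d2 y b + d2 y' b'"
    using M1.mdist_quadrilateral M2.mdist_quadrilateral pts by blast+
  moreover have "\<bar>d1 a a' - d2 b b'\<bar> \<le> c" using distortion_boundedD[OF assms(2) ab(1) ab'(1)] .
  ultimately show "\<bar>d1 x x' - d2 y y'\<bar> \<le> c + e" using ab ab' by linarith
qed

lemma optimal_correspondence:
  assumes "compact_metric_space M1 d1" "compact_metric_space M2 d2"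
  obtains R where "correspondence M1 M2 R" "distortion_bounded d1 d2 R (2 * GH_dist M1 d1 M2 d2)"
    "rel_closure R \<subseteq> R"
proof -
  obtain p where p: "p \<in> topspace map_pair_topology"
    "distortion_bounded d1 d2 (map_pair_relation M1 M2 (fst p) (snd p)) (2 * GH_dist M1 d1 M2 d2)"
    using optimal_map_pair[OF assms] .
  define R0 where "R0 = map_pair_relation M1 M2 (fst p) (snd p)"
  have R0: "correspondence M1 M2 R0"
    using p(1) unfolding R0_def topspace_map_pair_topology
    by (intro correspondence_map_pair_relation) auto
  then have R0_subset: "R0 \<subseteq> M1 \<times> M2" unfolding correspondence_def by blast
  have "correspondence M1 M2 (rel_closure R0)"
    using correspondence_mono[OF R0 subset_rel_closure[OF R0_subset] rel_closure_subset] .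
  moreover have "distortion_bounded d1 d2 (rel_closure R0) (2 * GH_dist M1 d1 M2 d2)"
    using distortion_bounded_rel_closure[OF R0_subset] p(2) unfolding R0_def by blast
  ultimately show ?thesis
    using that rel_closure_rel_closure[OF R0_subset] by blast
qed

lemma convergent_subsequence_in_rel_closed:
  fixes r :: "nat \<Rightarrow> 'a \<times> 'b"
  assumes "compact_space M1.mtopology" "compact_space M2.mtopology"
    and "R \<subseteq> M1 \<times> M2" "rel_closure R \<subseteq> R" "range r \<subseteq> R"
  obtains x y and k :: "nat \<Rightarrow> nat" where "(x, y) \<in> R" "strict_mono k"
    "\<And>e. e > 0 \<Longrightarrow> \<exists>N. \<forall>n\<ge>N. d1 (fst (r (k n))) x < e \<and> d2 (snd (r (k n))) y < e"
proof -
  have "fst (r n) \<in> M1 \<and> snd (r n) \<in> M2" for n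
    using assms(3,5) by (metis mem_Times_iff rangeI subsetD)
  then have r1: "range (fst \<circ> r) \<subseteq> M1" and r2: "range (snd \<circ> r \<circ> k) \<subseteq> M2" for k
    by auto
  obtain x k1 where x: "x \<in> M1" "strict_mono k1" "limitin M1.mtopology (fst \<circ> r \<circ> k1) x sequentially"
    using M1.compact_space_sequentially[THEN iffD1, OF assms(1), rule_format, OF r1] by blast
  obtain y k2 where y: "y \<in> M2" "strict_mono k2" "limitin M2.mtopology (snd \<circ> r \<circ> k1 \<circ> k2) y sequentially"
    using M2.compact_space_sequentially[THEN iffD1, OF assms(2), rule_format, OF r2[of k1]] by blast
  define k where "k = k1 \<circ> k2"
  have "limitin M1.mtopology (fst \<circ> r \<circ> k1 \<circ> k2) x sequentially"
    by (rule limitin_subsequence[OF y(2) x(3)])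
  then have lim1: "\<exists>N. \<forall>n\<ge>N. d1 (fst (r (k n))) x < e" and lim2: "\<exists>N. \<forall>n\<ge>N. d2 (snd (r (k n))) y < e"
    if "e > 0" for e
    using y(3) that unfolding M1.limit_metric_sequentially M2.limit_metric_sequentially k_def
    by (simp_all add: o_def) meson+
  have lim: "\<exists>N. \<forall>n\<ge>N. d1 (fst (r (k n))) x < e \<and> d2 (snd (r (k n))) y < e" if e: "e > 0" for e
  proof -
    obtain N1 N2 where "\<forall>n\<ge>N1. d1 (fst (r (k n))) x < e" "\<forall>n\<ge>N2. d2 (snd (r (k n))) y < e"
      using lim1[OF e] lim2[OF e] by blast
    then show ?thesis by (intro exI[of _ "max N1 N2"]) auto
  qed
  have "(x, y) \<in> rel_closure R"
  proof -
    have "\<exists>(a, b)\<in>R. d1 x a < e \<and> d2 y b < e" if e: "e > 0" for e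
    proof -
      obtain N where "d1 (fst (r (k N))) x < e" "d2 (snd (r (k N))) y < e"
        using lim[OF e] by blast
      moreover have "r (k N) \<in> R" using assms(5) by blast
      ultimately show ?thesis
        by (intro bexI[of _ "r (k N)"]) (auto simp: M1.commute M2.commute split: prod.split)
    qed
    then show ?thesis unfolding rel_closure_def using x(1) y(1) by blast
  qed
  then have "(x, y) \<in> R" using assms(4) by blast
  moreover have "strict_mono k" unfolding k_def using strict_mono_o[OF x(2) y(2)] .
  ultimately show ?thesis by (rule that) (rule lim)
qed

end

section \<open>Interpolating between two compact metric spaces\<close>

lemma continuous_if_dist_proportional:
  fixes f :: "real \<Rightarrow> real \<Rightarrow> real"
  assumes "\<And>s t. s \<in> I \<Longrightarrow> t \<in> I \<Longrightarrow> f s t = \<bar>t - s\<bar> * L" "0 \<le> L"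
  shows "\<forall>t\<in>I. \<forall>e>0. \<exists>\<delta>>0. \<forall>s\<in>I. \<bar>s - t\<bar> < \<delta> \<longrightarrow> f s t < e"
proof (intro ballI allI impI)
  fix t e :: real assume "t \<in> I" "e > 0"
  show "\<exists>\<delta>>0. \<forall>s\<in>I. \<bar>s - t\<bar> < \<delta> \<longrightarrow> f s t < e"
  proof (intro exI[of _ "e / (L + 1)"] conjI ballI impI)
    show "0 < e / (L + 1)" using \<open>e > 0\<close> assms(2) by simp
    fix s assume "s \<in> I" "\<bar>s - t\<bar> < e / (L + 1)"
    then have "\<bar>t - s\<bar> * (L + 1) < e"
      using assms(2) by (simp add: field_simps abs_minus_commute)
    moreover have "\<bar>t - s\<bar> * L \<le> \<bar>t - s\<bar> * (L + 1)" by (simp add: mult_left_mono)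
    ultimately show "f s t < e" using assms(1)[OF \<open>s \<in> I\<close> \<open>t \<in> I\<close>] by linarith
  qed
qed

locale GH_interpolation = Metric_space12 X dX Y dY
  for X :: "'a set" and dX and Y :: "'b set" and dY +
  fixes R :: "('a \<times> 'b) set" and x0 :: 'a and y0 :: 'b
  assumes correspondence: "correspondence X Y R" and x0: "x0 \<in> X" and y0: "y0 \<in> Y"
begin

text \<open>At an endpoint the coordinate of weight \<open>0\<close> is frozen at a base point, so that the
  space at \<open>0\<close> (resp. \<open>1\<close>) is a copy of \<open>X\<close> (resp. \<open>Y\<close>) rather than a pseudometric on \<open>R\<close>.\<close>
definition interp_point :: "real \<Rightarrow> 'a \<times> 'b \<Rightarrow> 'a \<times> 'b" where
  "interp_point t p = (if t = 1 then x0 else fst p, if t = 0 then y0 else snd p)"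

definition interp_space :: "real \<Rightarrow> ('a \<times> 'b) set" where
  "interp_space t = interp_point t ` R"

definition interp_dist :: "real \<Rightarrow> 'a \<times> 'b \<Rightarrow> 'a \<times> 'b \<Rightarrow> real" where
  "interp_dist t p q = (1 - t) * dX (fst p) (fst q) + t * dY (snd p) (snd q)"

lemma interp_dist_interp_point [simp]:
  "interp_dist t (interp_point t p) (interp_point t q) = (1 - t) * dX (fst p) (fst q) + t * dY (snd p) (snd q)"
  by (simp add: interp_dist_def interp_point_def)

lemma R_subset: "R \<subseteq> X \<times> Y"
  using correspondence unfolding correspondence_def by blast

lemma interp_space_subset: "interp_space t \<subseteq> X \<times> Y"
  using R_subset x0 y0 unfolding interp_space_def interp_point_def by auto

lemma interp_space_nonempty: "interp_space t \<noteq> {}"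
  using correspondence_nonempty[OF correspondence] x0 unfolding interp_space_def by blast

lemma interp_dist_nonneg: "t \<in> {0..1} \<Longrightarrow> 0 \<le> interp_dist t p q"
  by (simp add: interp_dist_def)

lemma Metric_space_interp:
  assumes t: "t \<in> {0..1}"
  shows "Metric_space (interp_space t) (interp_dist t)"
proof
  fix p q
  show "0 \<le> interp_dist t p q" using interp_dist_nonneg[OF t] .
  show "interp_dist t p q = interp_dist t q p"
    by (simp add: interp_dist_def M1.commute[of "fst p"] M2.commute[of "snd p"])
next
  fix p q assume "p \<in> interp_space t" "q \<in> interp_space t"
  then obtain p' q' where pq': "p' \<in> R" "q' \<in> R" "p = interp_point t p'" "q = interp_point t q'"
    unfolding interp_space_def by auto
  then have in_XY: "fst p' \<in> X" "fst q' \<in> X" "snd p' \<in> Y" "snd q' \<in> Y"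
    using R_subset by auto
  consider "t = 0" | "t = 1" | "0 < t" "t < 1" using t by fastforce
  then show "interp_dist t p q = 0 \<longleftrightarrow> p = q"
  proof cases
    case 3
    then have "interp_dist t p q = 0 \<longleftrightarrow> dX (fst p') (fst q') = 0 \<and> dY (snd p') (snd q') = 0"
      using pq' by (simp add: add_nonneg_eq_0_iff)
    also have "\<dots> \<longleftrightarrow> p = q"
      using in_XY pq' 3 by (simp add: interp_point_def prod_eq_iff)
    finally show ?thesis .
  qed (simp_all add: pq'(3,4) interp_point_def interp_dist_def prod_eq_iff in_XY)
next
  fix p q r assume "p \<in> interp_space t" "q \<in> interp_space t" "r \<in> interp_space t"
  then have "fst p \<in> X" "fst q \<in> X" "fst r \<in> X" "snd p \<in> Y" "snd q \<in> Y" "snd r \<in> Y"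
    using interp_space_subset[of t] by (auto simp: mem_Times_iff)
  then have "dX (fst p) (fst r) \<le> dX (fst p) (fst q) + dX (fst q) (fst r)"
    "dY (snd p) (snd r) \<le> dY (snd p) (snd q) + dY (snd q) (snd r)"
    using M1.triangle M2.triangle by blast+
  then have "(1 - t) * dX (fst p) (fst r) \<le> (1 - t) * (dX (fst p) (fst q) + dX (fst q) (fst r))"
    "t * dY (snd p) (snd r) \<le> t * (dY (snd p) (snd q) + dY (snd q) (snd r))"
    using t by (simp_all add: mult_left_mono)
  then show "interp_dist t p r \<le> interp_dist t p q + interp_dist t q r"
    by (simp add: interp_dist_def algebra_simps)
qed

lemma dist_bounded_interp:
  assumes "dist_bounded X dX A" "dist_bounded Y dY B" "t \<in> {0..1}"
  shows "dist_bounded (interp_space t) (interp_dist t) (max A B)"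
  unfolding dist_bounded_def
proof (intro ballI)
  fix p q assume "p \<in> interp_space t" "q \<in> interp_space t"
  then have "fst p \<in> X" "fst q \<in> X" "snd p \<in> Y" "snd q \<in> Y"
    using interp_space_subset[of t] by (auto simp: mem_Times_iff)
  then have "\<bar>dX (fst p) (fst q)\<bar> \<le> A" "\<bar>dY (snd p) (snd q)\<bar> \<le> B"
    using assms(1,2) unfolding dist_bounded_def by simp_all
  then have "dX (fst p) (fst q) \<le> max A B" "dY (snd p) (snd q) \<le> max A B"
    by (auto dest: abs_le_D1)
  then have "interp_dist t p q \<le> max A B"
    unfolding interp_dist_def using assms(3) by (intro convex_bound_le) auto
  then show "\<bar>interp_dist t p q\<bar> \<le> max A B"
    using interp_dist_nonneg[OF assms(3)] by simp
qed

lemma compact_metric_space_interp: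
  assumes "compact_metric_space X dX" "compact_metric_space Y dY" "rel_closure R \<subseteq> R"
    and t: "t \<in> {0..1}"
  shows "compact_metric_space (interp_space t) (interp_dist t)"
proof -
  interpret S: Metric_space "interp_space t" "interp_dist t"
    using Metric_space_interp[OF t] .
  have compact: "compact_space M1.mtopology" "compact_space M2.mtopology"
    using assms(1,2) unfolding compact_metric_space_def by auto
  have "compact_space S.mtopology"
    unfolding S.compact_space_sequentially
  proof (intro allI impI)
    fix \<sigma> :: "nat \<Rightarrow> 'a \<times> 'b" assume "range \<sigma> \<subseteq> interp_space t"
    then have "\<forall>n. \<exists>p. p \<in> R \<and> \<sigma> n = interp_point t p"
      unfolding interp_space_def by blast
    then obtain r where r: "\<And>n. r n \<in> R" "\<And>n. \<sigma> n = interp_point t (r n)"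
      by metis
    have rR: "range r \<subseteq> R" using r(1) by blast
    obtain x y and k :: "nat \<Rightarrow> nat" where xy: "(x, y) \<in> R" "strict_mono k"
      and lim: "\<And>e. e > 0 \<Longrightarrow> \<exists>N. \<forall>n\<ge>N. dX (fst (r (k n))) x < e \<and> dY (snd (r (k n))) y < e"
      using convergent_subsequence_in_rel_closed[OF compact R_subset assms(3) rR] by blast
    have "limitin S.mtopology (\<sigma> \<circ> k) (interp_point t (x, y)) sequentially"
      unfolding S.limit_metric_sequentially
    proof (intro conjI allI impI)
      show "interp_point t (x, y) \<in> interp_space t"
        using xy(1) unfolding interp_space_def by blast
      fix e :: real assume "e > 0"
      then obtain N where N: "\<forall>n\<ge>N. dX (fst (r (k n))) x < e \<and> dY (snd (r (k n))) y < e"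
        using lim by blast
      have "(\<sigma> \<circ> k) n \<in> interp_space t \<and> interp_dist t ((\<sigma> \<circ> k) n) (interp_point t (x, y)) < e"
        if "n \<ge> N" for n
      proof
        show "(\<sigma> \<circ> k) n \<in> interp_space t"
          using r unfolding interp_space_def by simp
        have "(1 - t) * dX (fst (r (k n))) x + t * dY (snd (r (k n))) y < e"
          using N that t by (intro convex_bound_lt) auto
        then show "interp_dist t ((\<sigma> \<circ> k) n) (interp_point t (x, y)) < e"
          by (simp add: r(2))
      qed
      then show "\<exists>N. \<forall>n\<ge>N. (\<sigma> \<circ> k) n \<in> interp_space t
          \<and> interp_dist t ((\<sigma> \<circ> k) n) (interp_point t (x, y)) < e"
        by blast
    qed
    with xy show "\<exists>l k. l \<in> interp_space t \<and> strict_mono k \<and> limitin S.mtopology (\<sigma> \<circ> k) l sequentially"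
      unfolding interp_space_def by blast
  qed
  then show ?thesis
    unfolding compact_metric_space_def using Metric_space_interp[OF t] interp_space_nonempty by blast
qed

lemma isometric_interp_space_0: "isometric (interp_space 0) (interp_dist 0) X dX"
  unfolding isometric_def
proof (intro exI[of _ fst] conjI ballI)
  have space: "interp_space 0 = (\<lambda>p. (fst p, y0)) ` R"
    unfolding interp_space_def interp_point_def by simp
  show "bij_betw fst (interp_space 0) X"
    using correspondence unfolding bij_betw_def inj_on_def space correspondence_def
    by (auto simp: image_comp o_def)
qed (simp add: interp_dist_def)

lemma isometric_interp_space_1: "isometric (interp_space 1) (interp_dist 1) Y dY"
  unfolding isometric_def
proof (intro exI[of _ snd] conjI ballI)
  have space: "interp_space 1 = (\<lambda>p. (x0, snd p)) ` R"
    unfolding interp_space_def interp_point_def by simp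
  show "bij_betw snd (interp_space 1) Y"
    using correspondence unfolding bij_betw_def inj_on_def space correspondence_def
    by (auto simp: image_comp o_def)
qed (simp add: interp_dist_def)

context
  fixes A B c
  assumes bounded: "dist_bounded X dX A" "dist_bounded Y dY B"
    and distortion: "distortion_bounded dX dY R c"
begin

lemma distortion_bound_pairs:
  "p \<in> R \<Longrightarrow> q \<in> R \<Longrightarrow> \<bar>dX (fst p) (fst q) - dY (snd p) (snd q)\<bar> \<le> c"
  using distortion_boundedD[OF distortion, of "fst p" "snd p" "fst q" "snd q"] by simp

lemma GH_dist_interp_space_le:
  "s \<in> {0..1} \<Longrightarrow> t \<in> {0..1} \<Longrightarrow>
    GH_dist (interp_space s) (interp_dist s) (interp_space t) (interp_dist t) \<le> \<bar>t - s\<bar> * c / 2"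
  by (rule GH_dist_le_interpolated[OF interp_space_nonempty dist_bounded_interp[OF bounded]
        dist_bounded_interp[OF bounded] interp_space_def[symmetric] interp_space_def[symmetric]
        interp_dist_interp_point interp_dist_interp_point distortion_bound_pairs])

lemma GH_dist_X_interp_space_le:
  "t \<in> {0..1} \<Longrightarrow> GH_dist X dX (interp_space t) (interp_dist t) \<le> t * c / 2"
  using GH_dist_le_interpolated[where s = 0 and t = t and u = fst and v = "interp_point t",
      OF _ bounded(1) dist_bounded_interp[OF bounded] _ interp_space_def[symmetric] _
      interp_dist_interp_point distortion_bound_pairs]
    correspondence x0 unfolding correspondence_def by fastforce

lemma GH_dist_interp_space_Y_le:
  "t \<in> {0..1} \<Longrightarrow> GH_dist (interp_space t) (interp_dist t) Y dY \<le> (1 - t) * c / 2"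
  using GH_dist_le_interpolated[where s = t and t = 1 and u = "interp_point t" and v = snd,
      OF interp_space_nonempty dist_bounded_interp[OF bounded] bounded(2) interp_space_def[symmetric] _
      interp_dist_interp_point _ distortion_bound_pairs]
    correspondence unfolding correspondence_def by fastforce

end

lemma GH_dist_interp_space:
  assumes bounded: "dist_bounded X dX A" "dist_bounded Y dY B"
    and optimal: "distortion_bounded dX dY R (2 * GH_dist X dX Y dY)"
    and s: "s \<in> {0..1}" and t: "t \<in> {0..1}"
  shows "GH_dist (interp_space s) (interp_dist s) (interp_space t) (interp_dist t)
    = \<bar>t - s\<bar> * GH_dist X dX Y dY"
proof -
  let ?d = "GH_dist X dX Y dY" and ?S = interp_space and ?D = interp_dist
  have bounded_interp: "dist_bounded (?S u) (?D u) (max A B)" if "u \<in> {0..1}" for u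
    using dist_bounded_interp[OF bounded that] .
  have lower: "(v - u) * ?d \<le> GH_dist (?S u) (?D u) (?S v) (?D v)"
    if u: "u \<in> {0..1}" and v: "v \<in> {0..1}" for u v
  proof -
    have "?d \<le> GH_dist X dX (?S u) (?D u) + GH_dist (?S u) (?D u) Y dY"
      using GH_dist_triangle[OF _ interp_space_nonempty _ bounded(1) bounded_interp[OF u] bounded(2)]
        x0 y0 by blast
    also have "GH_dist (?S u) (?D u) Y dY \<le> GH_dist (?S u) (?D u) (?S v) (?D v) + GH_dist (?S v) (?D v) Y dY"
      using GH_dist_triangle[OF interp_space_nonempty interp_space_nonempty _
          bounded_interp[OF u] bounded_interp[OF v] bounded(2)] y0 by blast
    finally show ?thesis
      using GH_dist_X_interp_space_le[OF bounded optimal u] GH_dist_interp_space_Y_le[OF bounded optimal v]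
      by (simp add: algebra_simps)
  qed
  have "GH_dist (?S s) (?D s) (?S t) (?D t) \<le> \<bar>t - s\<bar> * ?d"
    using GH_dist_interp_space_le[OF bounded optimal s t] by simp
  moreover have "\<bar>t - s\<bar> * ?d \<le> GH_dist (?S s) (?D s) (?S t) (?D t)"
    using lower[OF s t] lower[OF t s] GH_dist_commute[of "?S s" "?D s" "?S t" "?D t"]
    by (cases "s \<le> t") auto
  ultimately show ?thesis by linarith
qed

end

theorem mainTheorem3:
  fixes X :: "'a set" and dX :: "'a \<Rightarrow> 'a \<Rightarrow> real"
    and Y :: "'b set" and dY :: "'b \<Rightarrow> 'b \<Rightarrow> real"
  assumes "compact_metric_space X dX" and "compact_metric_space Y dY"
  shows "\<exists>(S :: real \<Rightarrow> ('a \<times> 'b) set) (D :: real \<Rightarrow> ('a \<times> 'b) \<Rightarrow> ('a \<times> 'b) \<Rightarrow> real).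
           (\<forall>t\<in>{0..1}. compact_metric_space (S t) (D t)) \<and>
           isometric (S 0) (D 0) X dX \<and> isometric (S 1) (D 1) Y dY \<and>
           (\<forall>t\<in>{0..1}. \<forall>e>0. \<exists>\<delta>>0. \<forall>s\<in>{0..1}.
              \<bar>s - t\<bar> < \<delta> \<longrightarrow> GH_dist (S s) (D s) (S t) (D t) < e) \<and>
           (\<forall>s\<in>{0..1}. \<forall>t\<in>{0..1}.
              GH_dist (S s) (D s) (S t) (D t) = \<bar>t - s\<bar> * GH_dist X dX Y dY)"
proof -
  interpret Metric_space12 X dX Y dY
    using assms unfolding compact_metric_space_def Metric_space12_def by blast
  obtain R where R: "correspondence X Y R" "distortion_bounded dX dY R (2 * GH_dist X dX Y dY)"
    "rel_closure R \<subseteq> R"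
    using optimal_correspondence[OF assms] .
  obtain x0 y0 where "x0 \<in> X" "y0 \<in> Y"
    using assms unfolding compact_metric_space_def by blast
  with R(1) interpret I: GH_interpolation X dX Y dY R x0 y0
    by unfold_locales
  obtain A B where bounded: "dist_bounded X dX A" "dist_bounded Y dY B"
    using assms compact_metric_space_bounded by metis
  have geodesic: "\<And>s t. s \<in> {0..1} \<Longrightarrow> t \<in> {0..1} \<Longrightarrow>
      GH_dist (I.interp_space s) (I.interp_dist s) (I.interp_space t) (I.interp_dist t)
      = \<bar>t - s\<bar> * GH_dist X dX Y dY"
    using I.GH_dist_interp_space[OF bounded R(2)] .
  have "0 \<le> GH_dist X dX Y dY"
    using GH_dist_nonneg[OF _ _ bounded] assms unfolding compact_metric_space_def by blast
  then show ?thesis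
    using I.compact_metric_space_interp[OF assms R(3)] I.isometric_interp_space_0
      I.isometric_interp_space_1 continuous_if_dist_proportional[OF geodesic] geodesic
    by blast
qed

end
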